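(* Let $\mathcal I$ be partial. For any policy $\pi$ with shielded policy $\pi'=\mathcal G(\pi)$ and any $h\ge0$, $$\Pr(s_\triangleright\in\xi^h\mid\pi,\mathcal M)\le\Pr(s_\triangleright\in\xi^h\mid\pi',\mathcal M)+\Pr(\xi^h\cap\mathcal I\neq\varnothing\mid\pi,\mathcal M),$$ where $s_\triangleright\in\xi^h$ means $s_t=s_\triangleright$ for some $t\le h$, and $\xi^h\cap\mathcal I\neq\varnothing$ means $(s_t,a_t)\in\mathcal I$ for some $t\le h$.
   Context: $\mathcal M=(\mathcal S,\mathcal A,P,r,\gamma)$ is a discounted MDP with discrete state and action spaces and initial distribution $d_0$; $\mathcal S$ contains two distinguished unsafe states $s_\triangleright,s_\circ$ and $\mathcal S_{\mathrm{safe}}=\mathcal S\setminus\{s_\triangleright,s_\circ\}$. $\Pr(\cdot\mid\pi,\mathcal M)$ is the law of trajectories $(s_0,a_0,s_1,\dots)$ of the stationary policy $\pi$ in $\mathcal M$ with $s_0\sim d_0$, and $\xi^h=(s_0,a_0,\dots,s_h,a_h)$. An intervention rule $\mathcal G=(\bar Q,\mu,\eta)$ (backup policy $\mu$, $\eta\in[0,1]$, $\bar Q:\mathcal S_{\mathrm{safe}}\times\mathcal A\to[0,1]$) has intervention set $\mathcal I=\{(s,a)\in\mathcal S_{\mathrm{safe}}\times\mathcal A:\bar Q(s,a)-\mathbb E_{a'\sim\mu(\cdot|s)}\bar Q(s,a')>\eta\}$ and shielded policy $\mathcal G(\pi)(a|s)=\pi(a|s)\mathbb 1\{(s,a)\notin\mathcal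 I\}+w(s)\mu(a|s)$, $w(s)=\sum_{\tilde a:(s,\tilde a)\in\mathcal I}\pi(\tilde a|s)$. A set $\mathcal X\subseteq\mathcal S_{\mathrm{safe}}\times\mathcal A$ is partial if for every $(s,a)\in\mathcal X$ there is $a'$ with $(s,a')\notin\mathcal X$. *)

theory Defs
  imports "HOL-Probability.Probability_Mass_Function"
begin

(* Law of the trajectory prefix (s_0,a_0,...,s_n,a_n) (as a list of length n+1)
   started from state s. *)
fun traj_from :: "('s \<Rightarrow> 'a \<Rightarrow> 's pmf) \<Rightarrow> ('s \<Rightarrow> 'a pmf) \<Rightarrow> 's \<Rightarrow> nat \<Rightarrow> ('s \<times> 'a) list pmf" where
  "traj_from P \<pi> s 0 = map_pmf (\<lambda>a. [(s, a)]) (\<pi> s)"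
| "traj_from P \<pi> s (Suc n) =
     bind_pmf (\<pi> s) (\<lambda>a. bind_pmf (P s a) (\<lambda>s'. map_pmf (\<lambda>xs. (s, a) # xs) (traj_from P \<pi> s' n)))"

definition traj :: "'s pmf \<Rightarrow> ('s \<Rightarrow> 'a \<Rightarrow> 's pmf) \<Rightarrow> ('s \<Rightarrow> 'a pmf) \<Rightarrow> nat \<Rightarrow> ('s \<times> 'a) list pmf" where
  "traj d0 P \<pi> h = bind_pmf d0 (\<lambda>s. traj_from P \<pi> s h)"

(* Intervention set I of the rule (Qbar, mu, eta); S_safe = UNIV - {s_tri, s_circ} *)
definition intervention_set ::
  "'s \<Rightarrow> 's \<Rightarrow> ('s \<Rightarrow> 'a \<Rightarrow> real) \<Rightarrow> ('s \<Rightarrow> 'a pmf) \<Rightarrow> real \<Rightarrow> ('s \<times> 'a) set" where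
  "intervention_set s_tri s_circ Qbar \<mu> \<eta> =
     {(s, a). s \<notin> {s_tri, s_circ} \<and>
              Qbar s a - measure_pmf.expectation (\<mu> s) (\<lambda>a'. Qbar s a') > \<eta>}"

definition partial_set :: "('s \<times> 'a) set \<Rightarrow> bool" where
  "partial_set X \<longleftrightarrow> (\<forall>(s, a) \<in> X. \<exists>a'. (s, a') \<notin> X)"

definition shield :: "('s \<times> 'a) set \<Rightarrow> ('s \<Rightarrow> 'a pmf) \<Rightarrow> ('s \<Rightarrow> 'a pmf) \<Rightarrow> 's \<Rightarrow> 'a pmf" where
  "shield I \<mu> \<pi> s = embed_pmf (\<lambda>a.
      pmf (\<pi> s) a * (if (s, a) \<notin> I then 1 else 0)
      + (\<Sum>\<^sub>\<infinity>a'\<in>{a'. (s, a') \<in> I}. pmf (\<pi> s) a') * pmf (\<mu> s) a)"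

end

theory Submission
  imports Defs
begin

text \<open>The shielded policy puts at least as much mass as \<pi> on every action outside
  the intervention set I. Couple the two trajectories step by step: as long as \<pi> has not played
  an action of I, every transition it makes is also made by the shielded policy with at least
  the same probability. Hence any event of the form "the trajectory hits X" is at most as likely
  under \<pi> as under the shielded policy, up to the probability that \<pi> hits I.\<close>

definition hits :: "('s \<times> 'a) set \<Rightarrow> ('s \<times> 'a) list set" where
  "hits X = {\<xi>. \<exists>x \<in> set \<xi>. x \<in> X}"

lemma vimage_Cons_hits: "(\<lambda>xs. x # xs) -` hits X = (if x \<in> X then UNIV else hits X)"
  by (auto simp: hits_def)

lemma emeasure_traj_from_0_hits:
  "emeasure (traj_from P \<pi> s 0) (hits X) = (\<integral>\<^sup>+a. (if (s, a) \<in> X then 1 else 0) \<partial>\<pi> s)"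
proof -
  have "(\<lambda>a. [(s, a)]) -` hits X = {a. (s, a) \<in> X}"
    by (auto simp: hits_def)
  then show ?thesis
    by (simp add: nn_integral_indicator[symmetric] indicator_def of_bool_def)
qed

lemma emeasure_traj_from_Suc_hits:
  "emeasure (traj_from P \<pi> s (Suc n)) (hits X)
     = (\<integral>\<^sup>+a. (if (s, a) \<in> X then 1 else \<integral>\<^sup>+s'. emeasure (traj_from P \<pi> s' n) (hits X) \<partial>P s a) \<partial>\<pi> s)"
  by (auto simp: vimage_Cons_hits intro!: nn_integral_cong)

lemma nn_integral_pmf_le_split:
  assumes dom: "\<And>a. \<not> J a \<Longrightarrow> pmf p a \<le> pmf q a"
    and split: "\<And>a. f a \<le> (if J a then 0 else g a) + h a"
  shows "(\<integral>\<^sup>+a. f a \<partial>p) \<le> (\<integral>\<^sup>+a. g a \<partial>q) + (\<integral>\<^sup>+a. h a \<partial>p)"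
proof -
  have "(\<integral>\<^sup>+a. f a \<partial>p) \<le> (\<integral>\<^sup>+a. (if J a then 0 else g a) + h a \<partial>p)"
    by (intro nn_integral_mono split)
  also have "\<dots> = (\<integral>\<^sup>+a. (if J a then 0 else g a) \<partial>p) + (\<integral>\<^sup>+a. h a \<partial>p)"
    by (rule nn_integral_add) auto
  also have "(\<integral>\<^sup>+a. (if J a then 0 else g a) \<partial>p) \<le> (\<integral>\<^sup>+a. g a \<partial>q)"
    unfolding nn_integral_measure_pmf
    by (intro nn_integral_mono) (auto intro!: mult_right_mono simp: dom)
  finally show ?thesis by simp
qed

lemma pmf_shield:
  "pmf (shield I \<mu> \<pi> s) a = pmf (\<pi> s) a * (if (s, a) \<notin> I then 1 else 0)
      + measure_pmf.prob (\<pi> s) {a'. (s, a') \<in> I} * pmf (\<mu> s) a"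
proof -
  define X where "X = {a'. (s, a') \<in> I}"
  have w: "(\<Sum>\<^sub>\<infinity>a'\<in>X. pmf (\<pi> s) a') = measure_pmf.prob (\<pi> s) X"
    by (simp add: measure_pmf_conv_infsetsum infsetsum_infsum pmf_abs_summable)
  define f where "f = (\<lambda>a. pmf (\<pi> s) a * (if (s, a) \<notin> I then 1 else 0)
      + measure_pmf.prob (\<pi> s) X * pmf (\<mu> s) a)"
  have nonneg: "\<And>a. 0 \<le> f a" unfolding f_def by simp
  have "(\<integral>\<^sup>+a. ennreal (f a) \<partial>count_space UNIV)
      = (\<integral>\<^sup>+a. ennreal (pmf (\<pi> s) a) * indicator (- X) a \<partial>count_space UNIV)
        + (\<integral>\<^sup>+a. ennreal (measure_pmf.prob (\<pi> s) X) * ennreal (pmf (\<mu> s) a) \<partial>count_space UNIV)"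
    unfolding f_def
    by (subst nn_integral_add[symmetric])
       (auto intro!: nn_integral_cong simp: ennreal_plus ennreal_mult X_def indicator_def)
  also have "\<dots> = emeasure (\<pi> s) (- X)
      + ennreal (measure_pmf.prob (\<pi> s) X) * (\<integral>\<^sup>+a. ennreal (pmf (\<mu> s) a) \<partial>count_space UNIV)"
    by (simp add: nn_integral_measure_pmf[symmetric] nn_integral_cmult)
  also have "\<dots> = 1"
    using measure_pmf.prob_compl[of X "\<pi> s"]
    by (simp add: nn_integral_pmf measure_pmf.emeasure_eq_measure measure_pmf.prob_compl
        ennreal_plus[symmetric] Compl_eq_Diff_UNIV del: ennreal_plus)
  finally have total: "(\<integral>\<^sup>+a. ennreal (f a) \<partial>count_space UNIV) = 1" .
  have "pmf (shield I \<mu> \<pi> s) a = pmf (embed_pmf f) a"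
    unfolding shield_def f_def w[unfolded X_def, symmetric] X_def ..
  also have "\<dots> = f a" using pmf_embed_pmf[OF nonneg total] .
  finally show ?thesis unfolding f_def X_def .
qed

lemma pmf_le_pmf_shield: "(s, a) \<notin> I \<Longrightarrow> pmf (\<pi> s) a \<le> pmf (shield I \<mu> \<pi> s) a"
  by (simp add: pmf_shield)

lemma emeasure_traj_from_hits_le:
  assumes dom: "\<And>s a. (s, a) \<notin> I \<Longrightarrow> pmf (\<pi> s) a \<le> pmf (\<pi>' s) a"
  shows "emeasure (traj_from P \<pi> s n) (hits X)
     \<le> emeasure (traj_from P \<pi>' s n) (hits X) + emeasure (traj_from P \<pi> s n) (hits I)"
proof (induction n arbitrary: s)
  case 0
  show ?case
    unfolding emeasure_traj_from_0_hits
    by (rule nn_integral_pmf_le_split[where J = "\<lambda>a. (s, a) \<in> I"]) (auto intro: dom)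
next
  case (Suc n)
  let ?F = "\<lambda>\<sigma> Y s'. emeasure (traj_from P \<sigma> s' n) (hits Y)"
  have split: "(if (s, a) \<in> X then 1 else \<integral>\<^sup>+s'. ?F \<pi> X s' \<partial>P s a)
      \<le> (if (s, a) \<in> I then 0 else if (s, a) \<in> X then 1 else \<integral>\<^sup>+s'. ?F \<pi>' X s' \<partial>P s a)
        + (if (s, a) \<in> I then 1 else \<integral>\<^sup>+s'. ?F \<pi> I s' \<partial>P s a)" for a
  proof (cases "(s, a) \<in> I")
    case True
    have "(\<integral>\<^sup>+s'. ?F \<pi> X s' \<partial>P s a) \<le> (\<integral>\<^sup>+s'. 1 \<partial>P s a)"
      by (intro nn_integral_mono) (simp add: measure_pmf.emeasure_le_1)
    then show ?thesis using True by simp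
  next
    case False
    have "(\<integral>\<^sup>+s'. ?F \<pi> X s' \<partial>P s a) \<le> (\<integral>\<^sup>+s'. ?F \<pi>' X s' + ?F \<pi> I s' \<partial>P s a)"
      by (intro nn_integral_mono Suc.IH)
    also have "\<dots> = (\<integral>\<^sup>+s'. ?F \<pi>' X s' \<partial>P s a) + (\<integral>\<^sup>+s'. ?F \<pi> I s' \<partial>P s a)"
      by (rule nn_integral_add) auto
    finally show ?thesis using False by (auto simp: add_increasing2)
  qed
  show ?case
    unfolding emeasure_traj_from_Suc_hits
    by (rule nn_integral_pmf_le_split[where J = "\<lambda>a. (s, a) \<in> I", OF _ split]) (simp add: dom)
qed

lemma prob_traj_hits_le:
  assumes "\<And>s a. (s, a) \<notin> I \<Longrightarrow> pmf (\<pi> s) a \<le> pmf (\<pi>' s) a"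
  shows "measure_pmf.prob (traj d0 P \<pi> h) (hits X)
     \<le> measure_pmf.prob (traj d0 P \<pi>' h) (hits X) + measure_pmf.prob (traj d0 P \<pi> h) (hits I)"
proof -
  have "emeasure (traj d0 P \<pi> h) (hits X) = (\<integral>\<^sup>+s. emeasure (traj_from P \<pi> s h) (hits X) \<partial>d0)"
    by (simp add: traj_def)
  also have "\<dots> \<le> (\<integral>\<^sup>+s. emeasure (traj_from P \<pi>' s h) (hits X)
                      + emeasure (traj_from P \<pi> s h) (hits I) \<partial>d0)"
    by (intro nn_integral_mono emeasure_traj_from_hits_le assms)
  also have "\<dots> = emeasure (traj d0 P \<pi>' h) (hits X) + emeasure (traj d0 P \<pi> h) (hits I)"
    by (simp add: traj_def nn_integral_add)
  finally show ?thesis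
    by (simp add: measure_pmf.emeasure_eq_measure ennreal_plus[symmetric] del: ennreal_plus)
qed

theorem mainTheorem17:
  fixes d0 :: "'s pmf" and P :: "'s \<Rightarrow> 'a \<Rightarrow> 's pmf"
    and s_tri s_circ :: 's
    and Qbar :: "'s \<Rightarrow> 'a \<Rightarrow> real" and \<mu> :: "'s \<Rightarrow> 'a pmf" and \<eta> :: real
    and \<pi> :: "'s \<Rightarrow> 'a pmf" and h :: nat
  assumes "s_tri \<noteq> s_circ"
    and "0 \<le> \<eta>" and "\<eta> \<le> 1"
    and "\<And>s a. s \<notin> {s_tri, s_circ} \<Longrightarrow> Qbar s a \<in> {0..1}"
    and "partial_set (intervention_set s_tri s_circ Qbar \<mu> \<eta>)"
  shows "measure_pmf.prob (traj d0 P \<pi> h) {\<xi>. \<exists>(s, a) \<in> set \<xi>. s = s_tri}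
     \<le> measure_pmf.prob (traj d0 P (shield (intervention_set s_tri s_circ Qbar \<mu> \<eta>) \<mu> \<pi>) h)
          {\<xi>. \<exists>(s, a) \<in> set \<xi>. s = s_tri}
       + measure_pmf.prob (traj d0 P \<pi> h)
          {\<xi>. \<exists>x \<in> set \<xi>. x \<in> intervention_set s_tri s_circ Qbar \<mu> \<eta>}"
proof -
  have unsafe: "{\<xi>. \<exists>(s, a) \<in> set \<xi>. s = s_tri} = hits ({s_tri} \<times> UNIV)"
    by (auto simp: hits_def)
  show ?thesis
    unfolding unsafe hits_def[symmetric]
    by (rule prob_traj_hits_le) (rule pmf_le_pmf_shield)
qed

end
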